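(* Let $\mathcal H$ be a non-binary MMP hypergraph of hypergraph-dimension $n\ge 3$ with $k$ vertices and $l$ hyperedges. Then $\mathcal H$ satisfies the v-inequality $$HI_{cm}\le HI_{cM}\le HI^m_{cM}<HI_q=l .$$
   Context: A hypergraph $\mathcal H=(V,E)$ consists of a finite vertex set $V$ and a family $E$ of subsets of $V$ (hyperedges). An MMP hypergraph of hypergraph-dimension $n\ge3$ is a connected hypergraph in which: every vertex belongs to at least one hyperedge; every hyperedge contains at least $2$ and at most $n$ vertices; no hyperedge shares only one vertex with another hyperedge; and any two hyperedges intersect in at most $n-2$ vertices. Consider assignments of values $0$ and $1$ to the vertices and the two rules: (i) no two vertices within any hyperedge are both assigned $1$; (ii) in every hyperedge not all vertices are assigned $0$. $\mathcal H$ is non-binary if no $0$-$1$ assignment satisfies both (i) and (ii), and binary otherwise. The multiplicity $m(v)$ of a vertex is the number of hyperedges containing it. A classical assignment is a $0$-$1$ assignment satisfying rule (i) in which no further vertex can be switched from $0$ to $1$ without violating (i) (for binary hypergraphs this includes the assignments satisfying (i) and (ii)). The classical vertex index $HI_c$ of a classical assignment is the number of vertices assigned $1$; $HI_{cM}$ and $HI_{cm}$ are its maximum and minimum over classical assignments. The classical multiplexed vertex index $HI^m_c$ of a classical assignment is $\sum_{v \text{ assigned } 1} m(v)$, and $HI^m_{cM}$ is its maximum over classical assignments. The quantum hypergraph index $HI_q$ is the sum over all hyperedges $E_j$ of the detection probabilities $1/\kappa(j)$ of each of the $\kappa(j)$ considered vertices of $E_j$ (a vertex in several hyperedges counted once per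 hyperedge); it equals $l$. *)

theory Defs
  imports Complex_Main
begin

text \<open>A hypergraph is given by a vertex set V and a set E of hyperedges (subsets of V).
  A 0-1 assignment is represented by the set S of vertices assigned 1.\<close>

definition hg_adj :: "'a set set \<Rightarrow> 'a \<Rightarrow> 'a \<Rightarrow> bool" where
  "hg_adj E u v \<longleftrightarrow> (\<exists>e\<in>E. u \<in> e \<and> v \<in> e)"

definition hg_connected :: "'a set \<Rightarrow> 'a set set \<Rightarrow> bool" where
  "hg_connected V E \<longleftrightarrow> (\<forall>u\<in>V. \<forall>v\<in>V. (hg_adj E)\<^sup>*\<^sup>* u v)"

definition MMP_hypergraph :: "nat \<Rightarrow> 'a set \<Rightarrow> 'a set set \<Rightarrow> bool" where
  "MMP_hypergraph n V E \<longleftrightarrow>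
     3 \<le> n \<and> finite V \<and> (\<forall>e\<in>E. e \<subseteq> V) \<and>
     hg_connected V E \<and>
     (\<forall>v\<in>V. \<exists>e\<in>E. v \<in> e) \<and>
     (\<forall>e\<in>E. 2 \<le> card e \<and> card e \<le> n) \<and>
     (\<forall>e\<in>E. \<forall>f\<in>E. e \<noteq> f \<longrightarrow> card (e \<inter> f) \<noteq> 1) \<and>
     (\<forall>e\<in>E. \<forall>f\<in>E. e \<noteq> f \<longrightarrow> card (e \<inter> f) \<le> n - 2)"

definition rule_i :: "'a set set \<Rightarrow> 'a set \<Rightarrow> bool" where
  "rule_i E S \<longleftrightarrow> (\<forall>e\<in>E. \<forall>u\<in>e. \<forall>v\<in>e. u \<in> S \<and> v \<in> S \<longrightarrow> u = v)"

definition rule_ii :: "'a set set \<Rightarrow> 'a set \<Rightarrow> bool" where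
  "rule_ii E S \<longleftrightarrow> (\<forall>e\<in>E. \<exists>v\<in>e. v \<in> S)"

definition non_binary :: "'a set \<Rightarrow> 'a set set \<Rightarrow> bool" where
  "non_binary V E \<longleftrightarrow> \<not> (\<exists>S\<subseteq>V. rule_i E S \<and> rule_ii E S)"

definition classical_assignment :: "'a set \<Rightarrow> 'a set set \<Rightarrow> 'a set \<Rightarrow> bool" where
  "classical_assignment V E S \<longleftrightarrow>
     S \<subseteq> V \<and> rule_i E S \<and> (\<forall>v\<in>V - S. \<not> rule_i E (insert v S))"

definition multiplicity :: "'a set set \<Rightarrow> 'a \<Rightarrow> nat" where
  "multiplicity E v = card {e\<in>E. v \<in> e}"

definition HI_cM :: "'a set \<Rightarrow> 'a set set \<Rightarrow> nat" where
  "HI_cM V E = Max {card S | S. classical_assignment V E S}"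

definition HI_cm :: "'a set \<Rightarrow> 'a set set \<Rightarrow> nat" where
  "HI_cm V E = Min {card S | S. classical_assignment V E S}"

definition HI_m_cM :: "'a set \<Rightarrow> 'a set set \<Rightarrow> nat" where
  "HI_m_cM V E = Max {(\<Sum>v\<in>S. multiplicity E v) | S. classical_assignment V E S}"

text \<open>Quantum hypergraph index: each vertex of each hyperedge e is detected with
  probability 1/|e|; summed over all hyperedges (vertex counted once per hyperedge).\<close>
definition HI_q :: "'a set set \<Rightarrow> real" where
  "HI_q E = (\<Sum>e\<in>E. \<Sum>v\<in>e. 1 / real (card e))"

end

theory Submission
  imports Defs
begin

text \<open>By double counting, the multiplexed index of an assignment S is the sum over all
  hyperedges e of the number of vertices of e assigned 1. Rule (i) bounds each summand by 1,
  and since no assignment of a non-binary hypergraph satisfies rule (ii), some hyperedge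
  contributes 0; hence the multiplexed index is below the number of hyperedges l. Each
  hyperedge contributes total detection probability 1 to the quantum index, so that
  index is l.\<close>

lemma Max_image_le_Max_image:
  fixes f g :: "'a \<Rightarrow> 'b::linorder"
  assumes "finite A" and "A \<noteq> {}" and "\<forall>x\<in>A. f x \<le> g x"
  shows "Max (f ` A) \<le> Max (g ` A)"
  using assms by (auto intro: order_trans[OF _ Max_ge])

lemma finite_hyperedges:
  assumes "finite V" and "\<forall>e\<in>E. e \<subseteq> V"
  shows "finite E"
  using assms by (meson PowI finite_Pow_iff finite_subset subsetI)

lemma sum_multiplicity_eq_sum_card_Int:
  assumes "finite S" and "finite E"
  shows "(\<Sum>v\<in>S. multiplicity E v) = (\<Sum>e\<in>E. card (S \<inter> e))"
proof -
  have "(\<Sum>v\<in>S. multiplicity E v) = (\<Sum>v\<in>S. \<Sum>e\<in>E. if v \<in> e then 1 else 0)"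
    unfolding multiplicity_def using assms(2) by (simp add: sum.If_cases Int_def)
  also have "\<dots> = (\<Sum>e\<in>E. \<Sum>v\<in>S. if v \<in> e then 1 else 0)"
    by (rule sum.swap)
  also have "\<dots> = (\<Sum>e\<in>E. card (S \<inter> e))"
    using assms(1) by (simp add: sum.If_cases)
  finally show ?thesis .
qed

lemma card_Int_hyperedge_le_1:
  assumes "rule_i E S" and "e \<in> E" and "finite e"
  shows "card (S \<inter> e) \<le> 1"
  using assms unfolding rule_i_def by (auto simp: card_le_Suc0_iff_eq)

lemma sum_multiplicity_less_card_hyperedges:
  assumes "finite V" and "\<forall>e\<in>E. e \<subseteq> V" and "S \<subseteq> V"
    and "rule_i E S" and "\<not> rule_ii E S"
  shows "(\<Sum>v\<in>S. multiplicity E v) < card E"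
proof -
  have "finite E" using assms(1,2) by (rule finite_hyperedges)
  have "finite S" using assms(1,3) by (rule finite_subset[rotated])
  obtain e0 where "e0 \<in> E" and "S \<inter> e0 = {}"
    using assms(5) unfolding rule_ii_def by blast
  have "card (S \<inter> e) \<le> 1" if "e \<in> E" for e
    using assms(2,4) that finite_subset[OF _ assms(1)] by (intro card_Int_hyperedge_le_1) auto
  then have "(\<Sum>e\<in>E. card (S \<inter> e)) < (\<Sum>e\<in>E. 1)"
    using \<open>finite E\<close> \<open>e0 \<in> E\<close> \<open>S \<inter> e0 = {}\<close> by (intro sum_strict_mono_ex1) (auto intro!: bexI[of _ e0])
  then show ?thesis
    using sum_multiplicity_eq_sum_card_Int[OF \<open>finite S\<close> \<open>finite E\<close>] by simp
qed

lemma card_le_sum_multiplicity: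
  assumes "finite E" and "S \<subseteq> \<Union>E"
  shows "card S \<le> (\<Sum>v\<in>S. multiplicity E v)"
proof -
  have "1 \<le> multiplicity E v" if "v \<in> S" for v
  proof -
    have "{e\<in>E. v \<in> e} \<noteq> {}" using assms(2) that by blast
    then show ?thesis unfolding multiplicity_def using assms(1) by (simp add: Suc_le_eq card_gt_0_iff)
  qed
  then have "(\<Sum>v\<in>S. 1) \<le> (\<Sum>v\<in>S. multiplicity E v)" by (rule sum_mono)
  then show ?thesis by simp
qed

lemma classical_assignment_exists:
  assumes "finite V"
  shows "\<exists>S. classical_assignment V E S"
proof -
  define I where "I = {S. S \<subseteq> V \<and> rule_i E S}"
  have "finite I" unfolding I_def using assms by simp
  moreover have "{} \<in> I" unfolding I_def rule_i_def by simp
  ultimately obtain S where "S \<in> I" and S_maximal: "\<forall>T\<in>I. S \<le> T \<longrightarrow> S = T"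
    using finite_has_maximal by blast
  have "\<not> rule_i E (insert v S)" if "v \<in> V - S" for v
  proof
    assume "rule_i E (insert v S)"
    then have "insert v S \<in> I" using \<open>S \<in> I\<close> that unfolding I_def by simp
    then show False using S_maximal that by blast
  qed
  then show ?thesis using \<open>S \<in> I\<close> unfolding classical_assignment_def I_def by blast
qed

lemma finite_classical_assignments:
  assumes "finite V"
  shows "finite {S. classical_assignment V E S}"
  using assms unfolding classical_assignment_def by simp

lemma HI_q_eq_card:
  assumes "\<forall>e\<in>E. card e \<noteq> 0"
  shows "HI_q E = real (card E)"
proof -
  have "(\<Sum>v\<in>e. 1 / real (card e)) = 1" if "e \<in> E" for e
    using assms that by simp
  then show ?thesis unfolding HI_q_def by simp
qed

theorem lemma4:
  fixes n :: nat and V :: "'a set" and E :: "'a set set"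
  assumes "MMP_hypergraph n V E"
    and "non_binary V E"
  shows "HI_cm V E \<le> HI_cM V E \<and> HI_cM V E \<le> HI_m_cM V E
         \<and> real (HI_m_cM V E) < HI_q E \<and> HI_q E = real (card E)"
proof -
  have "finite V" and E_sub: "\<forall>e\<in>E. e \<subseteq> V" and V_covered: "V \<subseteq> \<Union>E"
    and E_card: "\<forall>e\<in>E. 2 \<le> card e"
    using assms(1) unfolding MMP_hypergraph_def by auto
  have "finite E" using \<open>finite V\<close> E_sub by (rule finite_hyperedges)
  define C where "C = {S. classical_assignment V E S}"
  have "finite C" and "C \<noteq> {}"
    unfolding C_def using \<open>finite V\<close> finite_classical_assignments classical_assignment_exists
    by auto
  have C_indep: "S \<subseteq> V \<and> rule_i E S \<and> \<not> rule_ii E S" if "S \<in> C" for S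
    using that assms(2) unfolding C_def classical_assignment_def non_binary_def by auto
  have "HI_cm V E \<le> HI_cM V E"
    unfolding HI_cm_def HI_cM_def setcompr_eq_image C_def[symmetric]
    using \<open>finite C\<close> \<open>C \<noteq> {}\<close> by (simp add: Min_le_iff Max_ge_iff)
  moreover have "HI_cM V E \<le> HI_m_cM V E"
    unfolding HI_cM_def HI_m_cM_def setcompr_eq_image C_def[symmetric]
    using \<open>finite C\<close> \<open>C \<noteq> {}\<close> \<open>finite E\<close> V_covered
    by (intro Max_image_le_Max_image) (auto intro!: card_le_sum_multiplicity dest: C_indep)
  moreover have "HI_m_cM V E < card E"
  proof -
    have "(\<Sum>v\<in>S. multiplicity E v) < card E" if "S \<in> C" for S
      using \<open>finite V\<close> E_sub C_indep[OF that] by (intro sum_multiplicity_less_card_hyperedges) auto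
    then show ?thesis
      unfolding HI_m_cM_def setcompr_eq_image C_def[symmetric]
      using \<open>finite C\<close> \<open>C \<noteq> {}\<close> by simp
  qed
  moreover have "HI_q E = real (card E)"
    using E_card by (intro HI_q_eq_card) fastforce
  ultimately show ?thesis by simp
qed

end
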